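(* The map $n:\mathbb{T}\to\mathbb{N}$ defined below is a bijection.
   Context: Let $\mathbb{T}$ be the set of finite terms defined inductively by: the constant $e\in\mathbb{T}$; and if $X\in\mathbb{T}$ and $Xs=[X_1,\dots,X_k]$ ($k\ge 0$) is a finite list of elements of $\mathbb{T}$, then $v(X,Xs)\in\mathbb{T}$ and $w(X,Xs)\in\mathbb{T}$. Write $[\,]$ for the empty list and $[Y|Xs]$ for the list with first element $Y$ followed by the list $Xs$. Define $n:\mathbb{T}\to\mathbb{N}$ recursively by: $n(e)=0$; $n(v(X,[\,]))=2^{n(X)+1}-1$; $n(v(X,[Y|Xs]))=(n(w(Y,Xs))+1)\,2^{n(X)+1}-1$; $n(w(X,[\,]))=2^{n(X)+2}-2$; $n(w(X,[Y|Xs]))=(n(v(Y,Xs))+2)\,2^{n(X)+1}-2$. *)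

theory Defs
  imports Main
begin

datatype T = e | v T "T list" | w T "T list"

fun n :: "T \<Rightarrow> nat" where
  "n e = 0"
| "n (v X []) = 2 ^ (n X + 1) - 1"
| "n (v X (Y # Xs)) = (n (w Y Xs) + 1) * 2 ^ (n X + 1) - 1"
| "n (w X []) = 2 ^ (n X + 2) - 2"
| "n (w X (Y # Xs)) = (n (v Y Xs) + 2) * 2 ^ (n X + 1) - 2"

end

theory Submission
  imports Defs
begin

text \<open>
  Every positive integer is uniquely of the form \<open>2\<^sup>j * q\<close> with \<open>q\<close> odd.
  The defining equations say that \<open>n (v X Xs) + 1\<close> and \<open>n (w X Xs) + 2\<close> are of
  this form, with the exponent determined by \<open>n X\<close> and the odd cofactor \<open>q\<close>
  equal to \<open>1\<close> for an empty tail and to \<open>n (w Y Ys) + 1\<close>, resp. \<open>n (v Y Ys) + 2\<close>,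
  for a tail \<open>Y # Ys\<close>. So \<open>v\<close>-terms take exactly the odd values and \<open>w\<close>-terms the
  nonzero even ones, and the value of a term determines the values of its
  immediate subterms. Induction on the term then gives injectivity, and strong
  induction on the value gives surjectivity.
\<close>

lemma pow2_mult_odd_unique:
  fixes q q' :: nat
  assumes "odd q" "odd q'" "2 ^ i * q = 2 ^ j * q'"
  shows "i = j \<and> q = q'"
  using assms
proof (induction i arbitrary: j)
  case 0
  then show ?case by (cases j) auto
next
  case (Suc i)
  then show ?case by (cases j) auto
qed

lemma pow2_mult_odd_exists:
  fixes m :: nat
  assumes "m > 0"
  obtains j q where "m = 2 ^ j * q" "odd q"
  using assms
proof (induction m arbitrary: thesis rule: less_induct)
  case (less m)
  show ?case
  proof (cases "odd m")
    case True
    with less.prems(1)[of 0 m] show ?thesis by simp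
  next
    case False
    then obtain h where h: "m = 2 * h" by blast
    with less.prems(2) have "h < m" "h > 0" by auto
    then obtain j q where "h = 2 ^ j * q" "odd q" using less.IH by metis
    with h show ?thesis using less.prems(1)[of "Suc j" q] by simp
  qed
qed

lemma even_pow2_mult_oddE:
  fixes m :: nat
  assumes "even m" and "m > 0"
  obtains j q where "m = 2 ^ Suc j * q" "odd q" "2 * q \<le> m" "2 ^ Suc j \<le> m"
proof -
  obtain i q where iq: "m = 2 ^ i * q" "odd q"
    using pow2_mult_odd_exists[OF assms(2)] .
  with assms(1) obtain j where "i = Suc j" by (cases i) auto
  moreover have "q > 0" using iq(2) by (rule odd_pos)
  ultimately show thesis using that[of j q] iq by simp
qed

lemma exponent_le_of_pow2_le:
  fixes j k :: nat
  assumes "2 ^ j \<le> k + 2" and "k > 0"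
  shows "j \<le> k"
proof (rule ccontr)
  assume "\<not> j \<le> k"
  then have "2 ^ Suc k \<le> (2::nat) ^ j" by (intro power_increasing) auto
  moreover have "Suc k \<le> 2 ^ k" by (rule Suc_leI[OF less_exp])
  ultimately show False using assms by simp
qed

fun v_tail :: "T list \<Rightarrow> nat" where
  "v_tail [] = 1"
| "v_tail (Y # Ys) = n (w Y Ys) + 1"

fun w_tail :: "T list \<Rightarrow> nat" where
  "w_tail [] = 1"
| "w_tail (Y # Ys) = n (v Y Ys) + 2"

text \<open>\<open>n (w X []) + 2 = 2 ^ (n X + 2)\<close>: an empty tail contributes a factor \<open>2\<close>
  to the power instead of to the cofactor, so that the cofactor stays odd.\<close>

fun w_shift :: "T list \<Rightarrow> nat" where
  "w_shift [] = 2"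
| "w_shift (Y # Ys) = 1"

lemma w_shift_pos: "w_shift Xs > 0"
  by (cases Xs) simp_all

lemma n_v_plus_one: "n (v X Xs) + 1 = 2 ^ (n X + 1) * v_tail Xs"
proof (cases Xs)
  case Nil
  then show ?thesis by simp
next
  case (Cons Y Ys)
  have "n (v X Xs) = 2 ^ (n X + 1) * v_tail Xs - 1" using Cons by (simp add: mult.commute)
  moreover have "0 < 2 ^ (n X + 1) * v_tail Xs" using Cons by simp
  ultimately show ?thesis by linarith
qed

lemma n_w_plus_two: "n (w X Xs) + 2 = 2 ^ (n X + w_shift Xs) * w_tail Xs"
proof -
  have "n (w X Xs) = 2 ^ (n X + w_shift Xs) * w_tail Xs - 2"
    by (cases Xs) (simp_all add: mult.commute)
  moreover have "2 ^ 1 * 1 \<le> 2 ^ (n X + w_shift Xs) * w_tail Xs"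
    by (intro mult_mono power_increasing) (cases Xs; simp)+
  ultimately show ?thesis by simp
qed

lemma odd_n_v: "odd (n (v X Xs))"
proof -
  have "even (n (v X Xs) + 1)" using n_v_plus_one[of X Xs] by simp
  then show ?thesis by simp
qed

lemma even_n_w: "even (n (w X Xs))"
proof -
  have "even (n (w X Xs) + 2)" using n_w_plus_two[of X Xs] w_shift_pos[of Xs] by simp
  then show ?thesis by simp
qed

lemma n_w_ge_2: "n (w X Xs) \<ge> 2"
proof -
  have "2 ^ 2 \<le> 2 ^ (n X + w_shift Xs) * w_tail Xs"
  proof (cases Xs)
    case Nil
    then show ?thesis by (simp add: power_increasing)
  next
    case (Cons Y Ys)
    have "2 ^ 1 * 2 \<le> 2 ^ (n X + 1) * (n (v Y Ys) + 2)"
      by (intro mult_mono power_increasing) simp_all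
    with Cons show ?thesis by simp
  qed
  then show ?thesis using n_w_plus_two[of X Xs] by simp
qed

lemma n_eq_0_iff: "n t = 0 \<longleftrightarrow> t = e"
proof (cases t)
  case (v X Xs)
  with odd_pos[OF odd_n_v] show ?thesis by (simp del: n.simps)
next
  case (w X Xs)
  with n_w_ge_2[of X Xs] show ?thesis by (simp del: n.simps)
qed simp

lemma odd_nE:
  assumes "odd (n t)"
  obtains X Xs where "t = v X Xs"
  using assms even_n_w by (cases t) auto

lemma even_nE:
  assumes "even (n t)" and "t \<noteq> e"
  obtains X Xs where "t = w X Xs"
  using assms odd_n_v by (cases t) auto

lemma odd_v_tail: "odd (v_tail Xs)"
  by (cases Xs) (simp_all add: even_n_w)

lemma odd_w_tail: "odd (w_tail Xs)"
  by (cases Xs) (simp_all add: odd_n_v)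

lemma n_v_eq_n_vD:
  assumes "n (v X Xs) = n (v X' Xs')"
  shows "n X = n X' \<and> v_tail Xs = v_tail Xs'"
proof -
  have "2 ^ (n X + 1) * v_tail Xs = 2 ^ (n X' + 1) * v_tail Xs'"
    unfolding n_v_plus_one[symmetric] using assms by (simp only:)
  from pow2_mult_odd_unique[OF odd_v_tail odd_v_tail this] show ?thesis by simp
qed

lemma n_w_eq_n_wD:
  assumes "n (w X Xs) = n (w X' Xs')"
  shows "n X = n X' \<and> w_tail Xs = w_tail Xs'"
proof -
  have "2 ^ (n X + w_shift Xs) * w_tail Xs = 2 ^ (n X' + w_shift Xs') * w_tail Xs'"
    unfolding n_w_plus_two[symmetric] using assms by (simp only:)
  from pow2_mult_odd_unique[OF odd_w_tail odd_w_tail this]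
  have "n X + w_shift Xs = n X' + w_shift Xs'" "w_tail Xs = w_tail Xs'" by simp_all
  moreover from this(2) have "w_shift Xs = w_shift Xs'"
    by (cases Xs; cases Xs') auto
  ultimately show ?thesis by simp
qed

lemma v_tail_eqD:
  assumes "v_tail Xs = v_tail Xs'"
  shows "Xs = [] \<and> Xs' = [] \<or>
    (\<exists>Y Ys Y' Ys'. Xs = Y # Ys \<and> Xs' = Y' # Ys' \<and> n (w Y Ys) = n (w Y' Ys'))"
  using assms n_w_ge_2 n_eq_0_iff by (cases Xs; cases Xs') (auto simp del: n.simps)

lemma w_tail_eqD:
  assumes "w_tail Xs = w_tail Xs'"
  shows "Xs = [] \<and> Xs' = [] \<or>
    (\<exists>Y Ys Y' Ys'. Xs = Y # Ys \<and> Xs' = Y' # Ys' \<and> n (v Y Ys) = n (v Y' Ys'))"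
  using assms by (cases Xs; cases Xs') (auto simp del: n.simps)

lemma v_eq_if_n_eq:
  assumes IH: "\<And>u t. size u < size (v X Xs) \<Longrightarrow> n u = n t \<Longrightarrow> u = t"
    and eq: "n (v X Xs) = n t"
  shows "v X Xs = t"
proof -
  from eq have "odd (n t)" by (metis odd_n_v)
  then obtain X' Xs' where t: "t = v X' Xs'" by (rule odd_nE)
  from eq n_v_eq_n_vD[of X Xs X' Xs'] t
  have "n X = n X'" "v_tail Xs = v_tail Xs'" by simp_all
  have "X = X'" using IH \<open>n X = n X'\<close> by simp
  moreover from v_tail_eqD[OF \<open>v_tail Xs = v_tail Xs'\<close>] have "Xs = Xs'"
  proof (elim disjE exE conjE)
    fix Y Ys Y' Ys'
    assume "Xs = Y # Ys" "Xs' = Y' # Ys'" "n (w Y Ys) = n (w Y' Ys')"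
    with IH[OF _ this(3)] show ?thesis by simp
  qed simp
  ultimately show ?thesis using t by simp
qed

lemma w_eq_if_n_eq:
  assumes IH: "\<And>u t. size u < size (w X Xs) \<Longrightarrow> n u = n t \<Longrightarrow> u = t"
    and eq: "n (w X Xs) = n t"
  shows "w X Xs = t"
proof -
  from eq have "even (n t)" "n t \<ge> 2" by (metis even_n_w, metis n_w_ge_2)
  then have "even (n t)" "t \<noteq> e" by auto
  then obtain X' Xs' where t: "t = w X' Xs'" by (rule even_nE)
  from eq n_w_eq_n_wD[of X Xs X' Xs'] t
  have "n X = n X'" "w_tail Xs = w_tail Xs'" by simp_all
  have "X = X'" using IH \<open>n X = n X'\<close> by simp
  moreover from w_tail_eqD[OF \<open>w_tail Xs = w_tail Xs'\<close>] have "Xs = Xs'"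
  proof (elim disjE exE conjE)
    fix Y Ys Y' Ys'
    assume "Xs = Y # Ys" "Xs' = Y' # Ys'" "n (v Y Ys) = n (v Y' Ys')"
    with IH[OF _ this(3)] show ?thesis by simp
  qed simp
  ultimately show ?thesis using t by simp
qed

lemma inj_n: "inj n"
proof (rule injI)
  show "s = t" if "n s = n t" for s t
    using that
  proof (induction s arbitrary: t rule: measure_induct_rule[of size])
    case (less s)
    show ?case
    proof (cases s)
      case e
      with less.prems show ?thesis by (simp add: n_eq_0_iff)
    next
      case (v X Xs)
      with less show ?thesis by (metis v_eq_if_n_eq)
    next
      case (w X Xs)
      with less show ?thesis by (metis w_eq_if_n_eq)
    qed
  qed
qed

lemma v_tail_surj:
  assumes "odd q" and "q \<noteq> 1 \<Longrightarrow> q - 1 \<in> range n"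
  obtains Xs where "v_tail Xs = q"
proof (cases "q = 1")
  case True
  with that[of "[]"] show thesis by simp
next
  case False
  with assms obtain t where t: "n t = q - 1" by auto
  from assms(1) False have "q \<ge> 3" by presburger
  with assms(1) t have "even (n t)" "t \<noteq> e" by auto
  then obtain Y Ys where "t = w Y Ys" by (rule even_nE)
  with t \<open>q \<ge> 3\<close> that[of "Y # Ys"] show thesis by simp
qed

lemma w_tail_surj:
  assumes "odd q" and "q \<noteq> 1 \<Longrightarrow> q - 2 \<in> range n"
  obtains Xs where "w_tail Xs = q"
proof (cases "q = 1")
  case True
  with that[of "[]"] show thesis by simp
next
  case False
  with assms obtain t where t: "n t = q - 2" by auto
  from assms(1) False have "q \<ge> 3" by presburger
  with assms(1) t have "odd (n t)" by auto
  then obtain Y Ys where "t = v Y Ys" by (rule odd_nE)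
  with t \<open>q \<ge> 3\<close> that[of "Y # Ys"] show thesis by simp
qed

lemma odd_in_range_n:
  assumes "odd k" and IH: "\<And>m. m < k \<Longrightarrow> m \<in> range n"
  shows "k \<in> range n"
proof -
  from assms(1) have "k > 0" by (rule odd_pos)
  obtain j q where jq: "k + 1 = 2 ^ Suc j * q" "odd q" "2 * q \<le> k + 1" "2 ^ Suc j \<le> k + 1"
    by (rule even_pow2_mult_oddE[of "k + 1"]) (use assms(1) in auto)
  obtain Xs where Xs: "v_tail Xs = q"
    by (rule v_tail_surj[OF jq(2)]) (use IH \<open>k > 0\<close> jq(3) in auto)
  have "j < k" using exponent_le_of_pow2_le[of "Suc j" k] jq(4) \<open>k > 0\<close> by simp
  then obtain X where X: "n X = j" using IH by (metis rangeE)
  have "n (v X Xs) + 1 = k + 1" using n_v_plus_one[of X Xs] Xs X jq(1) by simp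
  then show ?thesis by (metis add_right_cancel rangeI)
qed

lemma even_in_range_n:
  assumes "even k" "k \<noteq> 0" and IH: "\<And>m. m < k \<Longrightarrow> m \<in> range n"
  shows "k \<in> range n"
proof -
  from assms(1,2) have "k \<ge> 2" by presburger
  obtain j q where jq: "k + 2 = 2 ^ Suc j * q" "odd q" "2 * q \<le> k + 2" "2 ^ Suc j \<le> k + 2"
    by (rule even_pow2_mult_oddE[of "k + 2"]) (use assms(1) in auto)
  obtain Xs where Xs: "w_tail Xs = q"
    by (rule w_tail_surj[OF jq(2)]) (use IH \<open>k \<ge> 2\<close> jq(3) in auto)
  have "w_shift Xs \<le> Suc j"
  proof (cases Xs)
    case Nil
    with Xs jq(1) \<open>k \<ge> 2\<close> show ?thesis by (cases j) auto
  qed simp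
  moreover have "Suc j \<le> k" using exponent_le_of_pow2_le[of "Suc j" k] jq(4) \<open>k \<ge> 2\<close> by simp
  ultimately have "Suc j - w_shift Xs < k" using w_shift_pos[of Xs] by simp
  then obtain X where "n X = Suc j - w_shift Xs" using IH by (metis rangeE)
  with \<open>w_shift Xs \<le> Suc j\<close> have X: "n X + w_shift Xs = Suc j" by simp
  have "n (w X Xs) + 2 = k + 2" using n_w_plus_two[of X Xs] Xs X jq(1) by simp
  then show ?thesis by (metis add_right_cancel rangeI)
qed

lemma surj_n: "surj n"
proof -
  have "k \<in> range n" for k
  proof (induction k rule: less_induct)
    case (less k)
    consider "k = 0" | "odd k" | "even k" "k \<noteq> 0" by auto
    then show ?case
    proof cases
      case 1
      then show ?thesis by (metis n.simps(1) rangeI)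
    next
      case 2
      then show ?thesis using less.IH by (rule odd_in_range_n)
    next
      case 3
      then show ?thesis using less.IH by (rule even_in_range_n)
    qed
  qed
  then show ?thesis by auto
qed

theorem proposition2:
  shows "bij n"
  using inj_n surj_n by (rule bijI)

end
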